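(* Suppose all speeds are integer multiples of a common factor $\epsilon\in(0,1]$ and the protocol is run with $\alpha=4s_{\max}/\epsilon$. If the system is in a state $x$ that is not a Nash equilibrium, then for every round $k\ge0$ \[ \mathbb{E}\big[\Psi_1(X^k)-\Psi_1(X^{k+1})\,\big|\,X^k=x\big] \ge \frac{\epsilon^2}{8\,\Delta\, s_{\max}^3}. \]
   Context: $G=(V,E)$ is an undirected graph on $n$ vertices (processors) with maximum degree $\Delta$; $\deg(i)$ is the degree and $d_{ij}=\max\{\deg(i),\deg(j)\}$. Processor $i$ has speed $s_i=n_i\epsilon$ with $n_i$ a positive integer, speeds scaled so that the smallest speed is $1$; $s_{\max}=\max_i s_i$, $\mathcal{S}=\sum_i s_i$. There are $m$ unit tasks; in state $x$, $w_i(x)$ is the number of tasks on $i$ and $\ell_i(x)=w_i(x)/s_i$. Protocol: in each round every task, independently, with $i$ its current processor, chooses a uniformly random neighbor $j$; if $\ell_i-\ell_j>1/s_j$ it moves to $j$ with probability $\frac{\deg(i)}{d_{ij}}\cdot\frac{\ell_i-\ell_j}{\alpha(1/s_i+1/s_j)w_i}$, otherwise stays. $X^k$ is the state after $k$ rounds. $\Psi_1(x)=\sum_i \frac{w_i(x)(w_i(x)+1)}{s_i}-\frac{m^2}{\mathcal{S}}-\frac{mn}{\mathcal{S}}-\frac{n^2}{4\mathcal{S}}+\frac14\sum_i\frac{1}{s_i}$. A state is a Nash equilibrium if $\ell_i-\ell_j\le 1/s_j$ for every ordered pair $(i,j)$ of adjacent processors. *)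

theory Defs
  imports "HOL-Probability.Probability"
begin

text \<open>Graph: finite vertex set V, symmetric irreflexive adjacency E (edges inside V).
 States: load vectors x :: 'v => nat (number of unit tasks on each processor).\<close>

definition nbrs :: "'v set \<Rightarrow> ('v \<Rightarrow> 'v \<Rightarrow> bool) \<Rightarrow> 'v \<Rightarrow> 'v set" where
  "nbrs V E i = {j \<in> V. E i j}"

definition deg :: "'v set \<Rightarrow> ('v \<Rightarrow> 'v \<Rightarrow> bool) \<Rightarrow> 'v \<Rightarrow> nat" where
  "deg V E i = card (nbrs V E i)"

definition maxdeg :: "'v set \<Rightarrow> ('v \<Rightarrow> 'v \<Rightarrow> bool) \<Rightarrow> nat" where
  "maxdeg V E = Max (deg V E ` V)"

definition dmax :: "'v set \<Rightarrow> ('v \<Rightarrow> 'v \<Rightarrow> bool) \<Rightarrow> 'v \<Rightarrow> 'v \<Rightarrow> nat" where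
  "dmax V E i j = max (deg V E i) (deg V E j)"

definition load :: "('v \<Rightarrow> real) \<Rightarrow> ('v \<Rightarrow> nat) \<Rightarrow> 'v \<Rightarrow> real" where
  "load s x i = real (x i) / s i"

definition smax :: "'v set \<Rightarrow> ('v \<Rightarrow> real) \<Rightarrow> real" where
  "smax V s = Max (s ` V)"

definition move_prob ::
  "'v set \<Rightarrow> ('v \<Rightarrow> 'v \<Rightarrow> bool) \<Rightarrow> ('v \<Rightarrow> real) \<Rightarrow> real \<Rightarrow> ('v \<Rightarrow> nat) \<Rightarrow> 'v \<Rightarrow> 'v \<Rightarrow> real" where
  "move_prob V E s \<alpha> x i j =
     real (deg V E i) / real (dmax V E i j) *
     ((load s x i - load s x j) / (\<alpha> * (1 / s i + 1 / s j) * real (x i)))"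

definition task_move ::
  "'v set \<Rightarrow> ('v \<Rightarrow> 'v \<Rightarrow> bool) \<Rightarrow> ('v \<Rightarrow> real) \<Rightarrow> real \<Rightarrow> ('v \<Rightarrow> nat) \<Rightarrow> 'v \<Rightarrow> 'v pmf" where
  "task_move V E s \<alpha> x i =
     (if nbrs V E i = {} then return_pmf i
      else bind_pmf (pmf_of_set (nbrs V E i)) (\<lambda>j.
        if load s x i - load s x j > 1 / s j
        then map_pmf (\<lambda>b. if b then j else i) (bernoulli_pmf (move_prob V E s \<alpha> x i j))
        else return_pmf i))"

text \<open>The tasks in state x: task t on processor i, for t < x i.\<close>
definition tasks :: "'v set \<Rightarrow> ('v \<Rightarrow> nat) \<Rightarrow> ('v \<times> nat) set" where
  "tasks V x = Sigma V (\<lambda>i. {..<x i})"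

definition round_step ::
  "'v set \<Rightarrow> ('v \<Rightarrow> 'v \<Rightarrow> bool) \<Rightarrow> ('v \<Rightarrow> real) \<Rightarrow> real \<Rightarrow> ('v \<Rightarrow> nat) \<Rightarrow> ('v \<Rightarrow> nat) pmf" where
  "round_step V E s \<alpha> x =
     map_pmf (\<lambda>d. \<lambda>j. card {p \<in> tasks V x. d p = j})
       (Pi_pmf (tasks V x) undefined (\<lambda>p. task_move V E s \<alpha> x (fst p)))"

primrec proc ::
  "'v set \<Rightarrow> ('v \<Rightarrow> 'v \<Rightarrow> bool) \<Rightarrow> ('v \<Rightarrow> real) \<Rightarrow> real \<Rightarrow> ('v \<Rightarrow> nat) pmf \<Rightarrow> nat \<Rightarrow> ('v \<Rightarrow> nat) pmf" where
  "proc V E s \<alpha> \<mu>0 0 = \<mu>0"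
| "proc V E s \<alpha> \<mu>0 (Suc k) = bind_pmf (proc V E s \<alpha> \<mu>0 k) (round_step V E s \<alpha>)"

definition joint ::
  "'v set \<Rightarrow> ('v \<Rightarrow> 'v \<Rightarrow> bool) \<Rightarrow> ('v \<Rightarrow> real) \<Rightarrow> real \<Rightarrow> ('v \<Rightarrow> nat) pmf \<Rightarrow> nat \<Rightarrow> (('v \<Rightarrow> nat) \<times> ('v \<Rightarrow> nat)) pmf" where
  "joint V E s \<alpha> \<mu>0 k =
     bind_pmf (proc V E s \<alpha> \<mu>0 k) (\<lambda>x. map_pmf (\<lambda>y. (x, y)) (round_step V E s \<alpha> x))"

definition Psi1 :: "'v set \<Rightarrow> ('v \<Rightarrow> real) \<Rightarrow> ('v \<Rightarrow> nat) \<Rightarrow> real" where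
  "Psi1 V s x =
    (let m = real (\<Sum>i\<in>V. x i); n = real (card V); S = (\<Sum>i\<in>V. s i) in
     (\<Sum>i\<in>V. real (x i) * (real (x i) + 1) / s i) - m^2 / S - m * n / S - n^2 / (4 * S)
     + (1/4) * (\<Sum>i\<in>V. 1 / s i))"

definition is_NE :: "('v \<Rightarrow> 'v \<Rightarrow> bool) \<Rightarrow> ('v \<Rightarrow> real) \<Rightarrow> ('v \<Rightarrow> nat) \<Rightarrow> bool" where
  "is_NE E s x \<longleftrightarrow> (\<forall>i j. E i j \<longrightarrow> load s x i - load s x j \<le> 1 / s j)"

end

theory Submission
  imports Defs
begin

text \<open>Conditioned on \<open>X\<^sup>k = x\<close>, the next loads count independent task destinations, so
  their means are \<open>x j\<close> plus the net expected inflow (built from the expected flows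
  \<open>f i j = x i * P i j\<close>) and their variances are sums of Bernoulli variances. Since the total
  number of tasks is preserved, the drop of \<open>\<Psi>\<^sub>1\<close> is that of \<open>\<Sigma> w (w + 1) / s\<close>, whose expectation
  is a linear term \<open>\<Sigma> f i j (c i - c j)\<close> with \<open>c = 2 \<ell> + 1 / s\<close>, minus the squared net inflows
  and the variances. Cauchy-Schwarz over neighbours (this is where the factor \<open>deg i / d i j\<close>
  in the migration probability is needed) and \<open>\<alpha> = 4 smax / \<epsilon>\<close> bound these losses, leaving
  at least \<open>\<Sigma> f i j (\<ell> i - \<ell> j - 1 / s j)\<close>. Every summand is nonnegative, and an edge violating
  the equilibrium condition contributes at least \<open>\<epsilon>\<^sup>2 / (8 \<Delta> smax\<^sup>3)\<close> because, all speeds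
  being multiples of \<open>\<epsilon>\<close>, its load gap is at least \<open>\<epsilon> / (s i s j)\<close>.\<close>

lemma pmf_map_Pair_left:
  "pmf (map_pmf (\<lambda>y. (a, y)) M) (b, y) = (if a = b then pmf M y else 0)"
proof (cases "a = b")
  case True
  have "inj (\<lambda>y. (a, y))" by (auto simp: inj_def)
  then show ?thesis using True pmf_map_inj'[of "\<lambda>y. (a, y)" M y] by simp
next
  case False
  then have "(b, y) \<notin> set_pmf (map_pmf (\<lambda>y. (a, y)) M)" by auto
  then show ?thesis using False by (simp add: set_pmf_iff del: set_map_pmf)
qed

lemma pmf_bind_map_Pair:
  "pmf (bind_pmf \<mu> (\<lambda>x. map_pmf (\<lambda>y. (x, y)) (R x))) (a, b) = pmf \<mu> a * pmf (R a) b"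
proof -
  have "pmf (bind_pmf \<mu> (\<lambda>x. map_pmf (\<lambda>y. (x, y)) (R x))) (a, b)
      = (\<integral>x. indicator {a} x * pmf (R a) b \<partial>measure_pmf \<mu>)"
    unfolding pmf_bind by (intro Bochner_Integration.integral_cong) (auto simp: pmf_map_Pair_left)
  also have "\<dots> = pmf \<mu> a * pmf (R a) b"
    by (simp add: pmf.rep_eq measure_pmf.emeasure_eq_measure)
  finally show ?thesis .
qed

lemma cond_pmf_bind_map_Pair:
  assumes "x \<in> set_pmf \<mu>"
  shows "cond_pmf (bind_pmf \<mu> (\<lambda>x. map_pmf (\<lambda>y. (x, y)) (R x))) {p. fst p = x}
       = map_pmf (\<lambda>y. (x, y)) (R x)"
    (is "cond_pmf ?J _ = _")
proof (rule pmf_eqI)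
  fix p :: "'a \<times> 'b"
  have "map_pmf fst ?J = \<mu>"
    by (simp add: map_bind_pmf pmf.map_comp o_def bind_return_pmf')
  then have prob_fst: "measure_pmf.prob ?J {p. fst p = x} = pmf \<mu> x"
    using measure_map_pmf[of fst ?J "{x}"] by (simp add: vimage_def measure_pmf_single)
  obtain y where "y \<in> set_pmf (R x)" using set_pmf_not_empty[of "R x"] by blast
  then have "(x, y) \<in> set_pmf ?J \<inter> {p. fst p = x}" using assms by auto
  then have ne: "set_pmf ?J \<inter> {p. fst p = x} \<noteq> {}" by blast
  have "pmf \<mu> x > 0" using assms by (simp add: pmf_positive)
  then show "pmf (cond_pmf ?J {p. fst p = x}) p = pmf (map_pmf (\<lambda>y. (x, y)) (R x)) p"
    by (cases p) (auto simp: pmf_cond[OF ne] prob_fst pmf_bind_map_Pair pmf_map_Pair_left)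
qed

lemma real_card_filter_eq_sum_of_bool:
  "finite T \<Longrightarrow> real (card {p\<in>T. P p}) = (\<Sum>p\<in>T. of_bool (P p))"
  by (simp add: sum_of_bool_eq Int_def conj_commute)

lemma expectation_of_bool_eq_pmf:
  "measure_pmf.expectation M (\<lambda>v. of_bool (v = j) :: real) = pmf M j"
proof -
  have "(\<lambda>v. of_bool (v = j) :: real) = indicator {j}" by (auto simp: indicator_def)
  then show ?thesis by (simp add: measure_pmf_single)
qed

lemma expectation_Pi_pmf_of_bool:
  assumes "finite T" "p \<in> T"
  shows "measure_pmf.expectation (Pi_pmf T dflt M) (\<lambda>d. of_bool (d p = j) :: real) = pmf (M p) j"
proof -
  have "measure_pmf.expectation (Pi_pmf T dflt M) (\<lambda>d. of_bool (d p = j) :: real)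
      = measure_pmf.expectation (map_pmf (\<lambda>d. d p) (Pi_pmf T dflt M)) (\<lambda>v. of_bool (v = j))"
    by simp
  also have "\<dots> = pmf (M p) j"
    using assms by (simp add: Pi_pmf_component expectation_of_bool_eq_pmf)
  finally show ?thesis .
qed

lemma expectation_Pi_pmf_of_bool_pair:
  assumes "finite T" "p \<in> T" "q \<in> T" "p \<noteq> q"
  shows "measure_pmf.expectation (Pi_pmf T dflt M) (\<lambda>d. of_bool (d p = j) * of_bool (d q = j) :: real)
       = pmf (M p) j * pmf (M q) j"
proof -
  define f where "f r v = (if r \<in> {p, q} then of_bool (v = j) else 1 :: real)" for r v
  have f_in: "f r = (\<lambda>v. of_bool (v = j))" if "r \<in> {p, q}" for r
    using that by (simp add: f_def fun_eq_iff)
  have f_out: "f r = (\<lambda>_. 1)" if "r \<notin> {p, q}" for r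
    using that by (simp add: f_def fun_eq_iff)
  have "(\<Prod>r\<in>T. f r (d r)) = (\<Prod>r\<in>{p, q}. f r (d r))" for d
    using assms by (intro prod.mono_neutral_right) (auto simp: f_def)
  then have "measure_pmf.expectation (Pi_pmf T dflt M) (\<lambda>d. of_bool (d p = j) * of_bool (d q = j) :: real)
      = measure_pmf.expectation (Pi_pmf T dflt M) (\<lambda>d. \<Prod>r\<in>T. f r (d r))"
    using assms by (simp add: f_def)
  also have "\<dots> = (\<Prod>r\<in>T. measure_pmf.expectation (M r) (f r))"
    using assms(1)
    by (intro expectation_prod_Pi_pmf) (auto simp: f_def intro: measure_pmf.integrable_const_bound[where B=1])
  also have "\<dots> = (\<Prod>r\<in>{p, q}. measure_pmf.expectation (M r) (f r))"
    using assms by (intro prod.mono_neutral_right) (auto simp: f_out)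
  also have "\<dots> = pmf (M p) j * pmf (M q) j"
    using assms by (simp add: f_in expectation_of_bool_eq_pmf)
  finally show ?thesis .
qed

lemma expectation_Pi_pmf_count:
  assumes "finite T"
  shows "measure_pmf.expectation (Pi_pmf T dflt M) (\<lambda>d. real (card {p\<in>T. d p = j}))
       = (\<Sum>p\<in>T. pmf (M p) j)"
proof -
  have "measure_pmf.expectation (Pi_pmf T dflt M) (\<lambda>d. real (card {p\<in>T. d p = j}))
      = measure_pmf.expectation (Pi_pmf T dflt M) (\<lambda>d. \<Sum>p\<in>T. of_bool (d p = j))"
    using assms by (simp add: real_card_filter_eq_sum_of_bool)
  also have "\<dots> = (\<Sum>p\<in>T. measure_pmf.expectation (Pi_pmf T dflt M) (\<lambda>d. of_bool (d p = j)))"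
    by (intro Bochner_Integration.integral_sum measure_pmf.integrable_const_bound[where B=1]) auto
  also have "\<dots> = (\<Sum>p\<in>T. pmf (M p) j)"
    using assms by (intro sum.cong) (auto simp: expectation_Pi_pmf_of_bool)
  finally show ?thesis .
qed

text \<open>The count of independent hits is a sum of independent Bernoulli variables, so its
  variance is the sum of their variances.\<close>
lemma expectation_Pi_pmf_count_squared:
  assumes "finite T"
  shows "measure_pmf.expectation (Pi_pmf T dflt M) (\<lambda>d. (real (card {p\<in>T. d p = j}))\<^sup>2)
       = (\<Sum>p\<in>T. pmf (M p) j)\<^sup>2 + (\<Sum>p\<in>T. pmf (M p) j * (1 - pmf (M p) j))"
proof -
  define a where "a p = pmf (M p) j" for p
  define I where "I p d = (of_bool (d p = j) :: real)" for p and d :: "'a \<Rightarrow> 'b"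
  have int: "integrable (measure_pmf (Pi_pmf T dflt M)) (\<lambda>d. I p d * I q d)" for p q
    by (intro measure_pmf.integrable_const_bound[where B=1]) (auto simp: I_def)
  have pair: "measure_pmf.expectation (Pi_pmf T dflt M) (\<lambda>d. I p d * I q d)
      = a p * a q + (if p = q then a p * (1 - a p) else 0)" if "p \<in> T" "q \<in> T" for p q
  proof (cases "p = q")
    case True
    then have "(\<lambda>d. I p d * I q d) = (\<lambda>d. of_bool (d p = j))" by (auto simp: I_def)
    then show ?thesis
      using True that assms by (simp add: expectation_Pi_pmf_of_bool a_def algebra_simps power2_eq_square)
  qed (use that assms expectation_Pi_pmf_of_bool_pair in \<open>simp add: I_def a_def\<close>)
  have "measure_pmf.expectation (Pi_pmf T dflt M) (\<lambda>d. (real (card {p\<in>T. d p = j}))\<^sup>2)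
      = measure_pmf.expectation (Pi_pmf T dflt M) (\<lambda>d. \<Sum>p\<in>T. \<Sum>q\<in>T. I p d * I q d)"
    by (simp only: real_card_filter_eq_sum_of_bool[OF assms] power2_eq_square sum_product I_def)
  also have "\<dots> = (\<Sum>p\<in>T. \<Sum>q\<in>T. measure_pmf.expectation (Pi_pmf T dflt M) (\<lambda>d. I p d * I q d))"
    by (simp add: Bochner_Integration.integral_sum Bochner_Integration.integrable_sum int)
  also have "\<dots> = (\<Sum>p\<in>T. \<Sum>q\<in>T. a p * a q + (if p = q then a p * (1 - a p) else 0))"
    using pair by (intro sum.cong) auto
  also have "\<dots> = (\<Sum>p\<in>T. a p)\<^sup>2 + (\<Sum>p\<in>T. a p * (1 - a p))"
    using assms by (simp add: sum.distrib power2_eq_square sum_product)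
  finally show ?thesis by (simp add: a_def)
qed

locale speed_network =
  fixes V :: "'v set" and E :: "'v \<Rightarrow> 'v \<Rightarrow> bool" and s :: "'v \<Rightarrow> real"
    and \<epsilon> :: real and x :: "'v \<Rightarrow> nat"
  assumes finV: "finite V"
    and Esym: "\<And>i j. E i j \<Longrightarrow> E j i"
    and Eirr: "\<And>i. \<not> E i i"
    and EV: "\<And>i j. E i j \<Longrightarrow> i \<in> V \<and> j \<in> V"
    and eps: "0 < \<epsilon>" "\<epsilon> \<le> 1"
    and speeds: "\<forall>i\<in>V. \<exists>n::nat. 0 < n \<and> s i = real n * \<epsilon>"
    and minspeed: "(\<exists>i\<in>V. s i = 1) \<and> (\<forall>i\<in>V. 1 \<le> s i)"
begin

abbreviation \<alpha> :: real where "\<alpha> \<equiv> 4 * smax V s / \<epsilon>"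
abbreviation P :: "'v \<Rightarrow> 'v \<Rightarrow> real" where "P i j \<equiv> pmf (task_move V E s \<alpha> x i) j"

definition active :: "'v \<Rightarrow> 'v \<Rightarrow> bool" where
  "active i j \<longleftrightarrow> E i j \<and> load s x i - load s x j > 1 / s j"

text \<open>The expected number of tasks moving from \<open>i\<close> to \<open>j\<close> in one round.\<close>
definition flow :: "'v \<Rightarrow> 'v \<Rightarrow> real" where
  "flow i j = (if active i j
     then (load s x i - load s x j) / (\<alpha> * real (dmax V E i j) * (1 / s i + 1 / s j))
     else 0)"

definition net_inflow :: "'v \<Rightarrow> real" where
  "net_inflow j = (\<Sum>i\<in>V. flow i j) - (\<Sum>k\<in>V. flow j k)"

definition count_variance :: "'v \<Rightarrow> real" where
  "count_variance j = (\<Sum>i\<in>V. real (x i) * P i j * (1 - P i j))"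

text \<open>The part of \<open>Psi1\<close> that is not determined by the total number of tasks.\<close>
definition Phi :: "('v \<Rightarrow> nat) \<Rightarrow> real" where
  "Phi z = (\<Sum>i\<in>V. real (z i) * (real (z i) + 1) / s i)"

lemma one_le_speed: "i \<in> V \<Longrightarrow> 1 \<le> s i"
  using minspeed by auto

lemma speed_pos: "i \<in> V \<Longrightarrow> 0 < s i"
  using one_le_speed by fastforce

lemma speed_le_smax: "i \<in> V \<Longrightarrow> s i \<le> smax V s"
  unfolding smax_def using finV by auto

lemma one_le_smax: "1 \<le> smax V s"
  using minspeed speed_le_smax by fastforce

lemma four_le_alpha: "4 \<le> \<alpha>"
proof -
  have "4 * smax V s \<le> 4 * smax V s / \<epsilon>"
    using eps one_le_smax by (simp add: le_divide_eq)
  then show ?thesis using one_le_smax by linarith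
qed

lemma alpha_pos: "0 < \<alpha>"
  using four_le_alpha by linarith

lemma finite_nbrs: "finite (nbrs V E i)"
  using finV by (simp add: nbrs_def)

lemma nbrs_subset: "nbrs V E i \<subseteq> V"
  by (auto simp: nbrs_def)

lemma deg_pos: "E i j \<Longrightarrow> 0 < deg V E i"
  unfolding deg_def using finite_nbrs EV by (auto simp: nbrs_def card_gt_0_iff)

lemma dmax_le_maxdeg: "i \<in> V \<Longrightarrow> j \<in> V \<Longrightarrow> dmax V E i j \<le> maxdeg V E"
  unfolding dmax_def maxdeg_def using finV by auto

lemma load_nonneg: "i \<in> V \<Longrightarrow> 0 \<le> load s x i"
  using speed_pos[of i] by (simp add: load_def)

lemma active_edge: "active i j \<Longrightarrow> E i j"
  by (simp add: active_def)

lemma active_mem: "active i j \<Longrightarrow> i \<in> V" "active i j \<Longrightarrow> j \<in> V"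
  using EV active_edge by blast+

lemma active_load_diff_gt: "active i j \<Longrightarrow> 1 / s j < load s x i - load s x j"
  by (simp add: active_def)

lemma active_load_diff_pos: "active i j \<Longrightarrow> 0 < load s x i - load s x j"
  using active_load_diff_gt active_mem speed_pos by (smt (verit) divide_pos_pos)

lemma active_tasks_pos:
  assumes "active i j"
  shows "0 < x i"
proof (rule ccontr)
  assume "\<not> 0 < x i"
  then have "load s x i = 0" by (simp add: load_def)
  then show False
    using active_load_diff_pos[OF assms] load_nonneg[OF active_mem(2)[OF assms]] by linarith
qed

text \<open>Integrality: all speeds are multiples of \<open>\<epsilon>\<close>, so the numerator of the load gap over the
  common denominator \<open>s i * s j / \<epsilon>\<close> is a positive integer.\<close>
lemma active_load_gap_ge:
  assumes "active i j"
  shows "\<epsilon> / (s i * s j) \<le> load s x i - load s x j - 1 / s j"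
proof -
  obtain ni nj :: nat where n: "0 < ni" "s i = real ni * \<epsilon>" "0 < nj" "s j = real nj * \<epsilon>"
    using speeds active_mem[OF assms] by metis
  define z :: int where "z = int (x i) * int nj - (int (x j) + 1) * int ni"
  have den: "0 < real ni * real nj * \<epsilon>" using n eps by simp
  have gap: "load s x i - load s x j - 1 / s j = real_of_int z / (real ni * real nj * \<epsilon>)"
    using n eps by (simp add: load_def z_def field_simps)
  then have "0 < real_of_int z / (real ni * real nj * \<epsilon>)"
    using active_load_diff_gt[OF assms] by linarith
  then have "0 < z"
    using den by (simp add: zero_less_divide_iff)
  then have "1 / (real ni * real nj * \<epsilon>) \<le> real_of_int z / (real ni * real nj * \<epsilon>)"
    using den by (intro divide_right_mono) auto
  moreover have "\<epsilon> / (s i * s j) = 1 / (real ni * real nj * \<epsilon>)"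
    using n eps by (simp add: field_simps)
  ultimately show ?thesis using gap by simp
qed

lemma move_prob_bounds:
  assumes "active i j"
  shows "0 \<le> move_prob V E s \<alpha> x i j" "move_prob V E s \<alpha> x i j \<le> 1"
proof -
  have ij: "i \<in> V" "j \<in> V" using active_mem[OF assms] .
  define A where "A = \<alpha> * (1 / s i + 1 / s j) * real (x i)"
  have deg_ratio: "0 \<le> real (deg V E i) / real (dmax V E i j)"
    "real (deg V E i) / real (dmax V E i j) \<le> 1"
    using deg_pos[OF active_edge[OF assms]] by (auto simp: dmax_def divide_le_eq_1)
  have A_pos: "0 < A"
    using alpha_pos speed_pos[OF ij(1)] speed_pos[OF ij(2)] active_tasks_pos[OF assms]
    unfolding A_def by (intro mult_pos_pos add_pos_pos) auto
  have "load s x i - load s x j \<le> 1 * (1 / s i) * real (x i)"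
    using load_nonneg[OF ij(2)] by (simp add: load_def)
  also have "\<dots> \<le> A"
    unfolding A_def using four_le_alpha speed_pos[OF ij(1)] speed_pos[OF ij(2)]
    by (intro mult_right_mono mult_mono) auto
  finally have q1: "(load s x i - load s x j) / A \<le> 1"
    using A_pos by simp
  have q0: "0 \<le> (load s x i - load s x j) / A"
    using active_load_diff_pos[OF assms] A_pos by simp
  show "0 \<le> move_prob V E s \<alpha> x i j"
    unfolding move_prob_def A_def[symmetric] by (rule mult_nonneg_nonneg[OF deg_ratio(1) q0])
  show "move_prob V E s \<alpha> x i j \<le> 1"
    unfolding move_prob_def A_def[symmetric] by (rule mult_le_one[OF deg_ratio(2) q0 q1])
qed

lemma set_task_move_subset: "i \<in> V \<Longrightarrow> set_pmf (task_move V E s \<alpha> x i) \<subseteq> V"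
  using finite_nbrs
  by (auto simp: task_move_def set_pmf_of_set split: if_splits dest: subsetD[OF nbrs_subset])

lemma sum_P_eq_1: "i \<in> V \<Longrightarrow> (\<Sum>j\<in>V. P i j) = 1"
  using finV set_task_move_subset by (intro sum_pmf_eq_1) auto

lemma P_off_diagonal:
  assumes "i \<in> V" "j \<noteq> i"
  shows "P i j = (if active i j then move_prob V E s \<alpha> x i j / real (deg V E i) else 0)"
proof (cases "nbrs V E i = {}")
  case True
  then have "\<not> active i j" by (simp add: nbrs_def) (meson active_edge active_mem(2))
  then show ?thesis using True assms by (simp add: task_move_def)
next
  case False
  define N where "N = nbrs V E i"
  define attempt where "attempt k = (if load s x i - load s x k > 1 / s k
      then map_pmf (\<lambda>b. if b then k else i) (bernoulli_pmf (move_prob V E s \<alpha> x i k))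
      else return_pmf i)" for k
  have pmf_attempt: "pmf (attempt k) j = (if k = j \<and> active i j then move_prob V E s \<alpha> x i j else 0)"
    if "k \<in> N" for k
  proof (cases "load s x i - load s x k > 1 / s k")
    case True
    have "E i k" using that by (simp add: N_def nbrs_def)
    then have k: "active i k" "k \<noteq> i" using True Eirr by (auto simp: active_def)
    have "(\<lambda>b. if b then k else i) -` {j} = (if k = j then {True} else {})"
      using k assms by (auto split: if_splits)
    then show ?thesis
      using True k move_prob_bounds[OF k(1)] by (auto simp: attempt_def pmf_map measure_pmf_single)
  qed (use assms in \<open>auto simp: attempt_def active_def\<close>)
  have "P i j = (\<Sum>k\<in>N. pmf (attempt k) j) / real (card N)"
    using False finite_nbrs by (simp add: task_move_def N_def attempt_def pmf_bind_pmf_of_set)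
  also have "(\<Sum>k\<in>N. pmf (attempt k) j)
      = (\<Sum>k\<in>N. if k = j \<and> active i j then move_prob V E s \<alpha> x i j else 0)"
    using pmf_attempt by (intro sum.cong) auto
  also have "\<dots> = (if active i j then move_prob V E s \<alpha> x i j else 0)"
    using active_edge active_mem finite_nbrs by (auto simp: N_def nbrs_def)
  finally show ?thesis by (simp add: N_def deg_def)
qed

lemma tasks_mult_P_eq_flow:
  assumes "i \<in> V" "j \<noteq> i"
  shows "real (x i) * P i j = flow i j"
proof (cases "active i j")
  case True
  have cancel: "X * (d / m * (D / (A * S * X)) / d) = D / (A * m * S)"
    if "X \<noteq> 0" "d \<noteq> 0" for X d m D A S :: real
    using that by (simp add: field_simps)
  have "real (x i) \<noteq> 0" "real (deg V E i) \<noteq> 0"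
    using active_tasks_pos[OF True] deg_pos[OF active_edge[OF True]] by auto
  then show ?thesis
    using True unfolding P_off_diagonal[OF assms] flow_def move_prob_def
    by (simp only: cancel[OF \<open>real (x i) \<noteq> 0\<close> \<open>real (deg V E i) \<noteq> 0\<close>] if_True)
qed (simp add: P_off_diagonal[OF assms] flow_def)

abbreviation destinations :: "('v \<times> nat \<Rightarrow> 'v) pmf" where
  "destinations \<equiv> Pi_pmf (tasks V x) undefined (\<lambda>p. task_move V E s \<alpha> x (fst p))"

lemma finite_tasks: "finite (tasks V x)"
  using finV by (simp add: tasks_def)

lemma sum_over_tasks: "(\<Sum>p\<in>tasks V x. f (fst p)) = (\<Sum>i\<in>V. real (x i) * f i)"
proof -
  have "(\<Sum>i\<in>V. \<Sum>t<x i. f i) = (\<Sum>(i, t)\<in>tasks V x. f i)"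
    unfolding tasks_def using finV by (intro sum.Sigma) auto
  then show ?thesis by (simp add: case_prod_beta)
qed

lemma destinations_in_V:
  assumes "d \<in> set_pmf destinations" "p \<in> tasks V x"
  shows "d p \<in> V"
proof -
  have "d \<in> PiE_dflt (tasks V x) undefined (\<lambda>p. set_pmf (task_move V E s \<alpha> x (fst p)))"
    using assms(1) by (subst (asm) set_Pi_pmf[OF finite_tasks]) (simp add: o_def)
  then have "d p \<in> set_pmf (task_move V E s \<alpha> x (fst p))"
    using assms(2) unfolding PiE_dflt_def by blast
  moreover have "fst p \<in> V"
    using assms(2) by (auto simp: tasks_def)
  ultimately show ?thesis
    using set_task_move_subset by blast
qed

lemma finite_set_destinations: "finite (set_pmf destinations)"
proof -
  have "finite (set_pmf (task_move V E s \<alpha> x (fst p)))" if "p \<in> tasks V x" for p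
    using that finite_subset[OF set_task_move_subset finV] by (auto simp: tasks_def)
  then show ?thesis
    by (subst set_Pi_pmf[OF finite_tasks]) (auto simp: o_def intro: finite_PiE_dflt[OF finite_tasks])
qed

lemma sum_counts_eq:
  assumes "d \<in> set_pmf destinations"
  shows "(\<Sum>j\<in>V. card {p \<in> tasks V x. d p = j}) = (\<Sum>i\<in>V. x i)"
proof -
  have "(\<Sum>j\<in>V. real (card {p \<in> tasks V x. d p = j}))
      = (\<Sum>p\<in>tasks V x. \<Sum>j\<in>V. of_bool (d p = j))"
    using finite_tasks by (simp add: real_card_filter_eq_sum_of_bool sum.swap[of _ V])
  also have "\<dots> = (\<Sum>p\<in>tasks V x. 1)"
    using finV destinations_in_V[OF assms] by (intro sum.cong) auto
  also have "\<dots> = (\<Sum>i\<in>V. real (x i))"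
    using sum_over_tasks[of "\<lambda>_. 1"] by simp
  finally show ?thesis by (simp flip: of_nat_sum)
qed

lemma expected_count:
  "measure_pmf.expectation destinations (\<lambda>d. real (card {p \<in> tasks V x. d p = j}))
   = (\<Sum>i\<in>V. real (x i) * P i j)"
  by (rule trans[OF expectation_Pi_pmf_count[OF finite_tasks] sum_over_tasks])

lemma expected_count_squared:
  "measure_pmf.expectation destinations (\<lambda>d. (real (card {p \<in> tasks V x. d p = j}))\<^sup>2)
   = (\<Sum>i\<in>V. real (x i) * P i j)\<^sup>2 + count_variance j"
  unfolding expectation_Pi_pmf_count_squared[OF finite_tasks] sum_over_tasks[of "\<lambda>i. P i j"]
    sum_over_tasks[of "\<lambda>i. P i j * (1 - P i j)"] count_variance_def
  by (simp add: mult.assoc)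

lemma flow_self: "flow i i = 0"
  using Eirr by (simp add: flow_def active_def)

text \<open>Tasks staying on \<open>j\<close> are those not leaving it, which turns the diagonal term into
  an outflow.\<close>
lemma expected_arrivals:
  assumes "j \<in> V"
  shows "(\<Sum>i\<in>V. real (x i) * P i j) = real (x j) + net_inflow j"
proof -
  have sum_remove: "(\<Sum>i\<in>V. f i) = f j + (\<Sum>i\<in>V - {j}. f i)" for f :: "'v \<Rightarrow> real"
    using finV assms by (simp add: sum.remove)
  have "real (x j) * P j j = real (x j) * (1 - (\<Sum>k\<in>V - {j}. P j k))"
    using sum_P_eq_1[OF assms] sum_remove[of "P j"] by simp
  also have "\<dots> = real (x j) - (\<Sum>k\<in>V - {j}. flow j k)"
    using assms by (simp add: right_diff_distrib sum_distrib_left tasks_mult_P_eq_flow)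
  finally have stay: "real (x j) * P j j = real (x j) - (\<Sum>k\<in>V - {j}. flow j k)" .
  have arrive: "(\<Sum>i\<in>V - {j}. real (x i) * P i j) = (\<Sum>i\<in>V - {j}. flow i j)"
    by (intro sum.cong refl tasks_mult_P_eq_flow) auto
  show ?thesis
    using stay arrive assms sum_remove[of "\<lambda>i. real (x i) * P i j"] sum_remove[of "\<lambda>i. flow i j"]
      sum_remove[of "flow j"]
    by (simp add: net_inflow_def flow_self tasks_mult_P_eq_flow)
qed

lemma expected_Phi_round:
  "measure_pmf.expectation (round_step V E s \<alpha> x) Phi
   = (\<Sum>j\<in>V. ((real (x j) + net_inflow j)\<^sup>2 + (real (x j) + net_inflow j) + count_variance j) / s j)"
proof -
  let ?c = "\<lambda>d j. real (card {p \<in> tasks V x. d p = j})"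
  have int: "integrable (measure_pmf destinations) f" for f :: "_ \<Rightarrow> real"
    by (rule integrable_measure_pmf_finite[OF finite_set_destinations])
  have "measure_pmf.expectation (round_step V E s \<alpha> x) Phi
      = measure_pmf.expectation destinations (\<lambda>d. \<Sum>j\<in>V. ((?c d j)\<^sup>2 + ?c d j) / s j)"
    by (simp add: round_step_def Phi_def power2_eq_square distrib_left)
  also have "\<dots> = (\<Sum>j\<in>V. (measure_pmf.expectation destinations (\<lambda>d. (?c d j)\<^sup>2)
      + measure_pmf.expectation destinations (\<lambda>d. ?c d j)) / s j)"
    by (simp add: Bochner_Integration.integral_sum int)
  also have "\<dots> = (\<Sum>j\<in>V. ((real (x j) + net_inflow j)\<^sup>2 + (real (x j) + net_inflow j)
      + count_variance j) / s j)"
    by (intro sum.cong refl) (simp add: expected_count expected_count_squared expected_arrivals)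
  finally show ?thesis .
qed

lemma Psi1_diff_round:
  assumes "y \<in> set_pmf (round_step V E s \<alpha> x)"
  shows "Psi1 V s x - Psi1 V s y = Phi x - Phi y"
proof -
  obtain d where "d \<in> set_pmf destinations" "y = (\<lambda>j. card {p \<in> tasks V x. d p = j})"
    using assms by (auto simp: round_step_def)
  then have "(\<Sum>i\<in>V. y i) = (\<Sum>i\<in>V. x i)"
    using sum_counts_eq by simp
  then show ?thesis by (simp add: Psi1_def Phi_def Let_def)
qed

lemma expected_Phi_drop:
  "Phi x - measure_pmf.expectation (round_step V E s \<alpha> x) Phi
   = - (\<Sum>j\<in>V. (2 * load s x j + 1 / s j) * net_inflow j)
     - (\<Sum>j\<in>V. (net_inflow j)\<^sup>2 / s j) - (\<Sum>j\<in>V. count_variance j / s j)"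
proof -
  have "real (x j) * (real (x j) + 1) / s j
      - ((real (x j) + net_inflow j)\<^sup>2 + (real (x j) + net_inflow j) + count_variance j) / s j
      = - ((2 * load s x j + 1 / s j) * net_inflow j) - (net_inflow j)\<^sup>2 / s j - count_variance j / s j"
    if "j \<in> V" for j
    using speed_pos[OF that] by (simp add: load_def field_simps power2_eq_square)
  then show ?thesis
    unfolding expected_Phi_round Phi_def
    by (simp add: sum_subtractf[symmetric] sum_negf[symmetric] cong: sum.cong)
qed

lemma flow_active:
  "active i j \<Longrightarrow>
    flow i j = (load s x i - load s x j) / (\<alpha> * real (dmax V E i j) * (1 / s i + 1 / s j))"
  by (simp add: flow_def)

lemma flow_inactive: "\<not> active i j \<Longrightarrow> flow i j = 0"
  by (simp add: flow_def)

lemma dmax_pos: "active i j \<Longrightarrow> 0 < real (dmax V E i j)"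
  using deg_pos[OF active_edge] by (fastforce simp: dmax_def)

lemma inv_speed_sum_pos: "active i j \<Longrightarrow> 0 < 1 / s i + 1 / s j"
  using active_mem speed_pos by (simp add: add_pos_pos)

lemma flow_nonneg: "0 \<le> flow i j"
proof (cases "active i j")
  case True
  have "0 < \<alpha> * real (dmax V E i j) * (1 / s i + 1 / s j)"
    by (rule mult_pos_pos[OF mult_pos_pos[OF alpha_pos dmax_pos[OF True]] inv_speed_sum_pos[OF True]])
  then show ?thesis
    unfolding flow_active[OF True]
    by (rule divide_nonneg_pos[OF less_imp_le[OF active_load_diff_pos[OF True]]])
qed (simp add: flow_inactive)

lemma flow_not_edge: "\<not> E i j \<Longrightarrow> flow i j = 0"
  using active_edge flow_inactive by blast

lemma flow_mult_flow_rev: "flow i j * flow j i = 0"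
  using active_load_diff_pos[of i j] active_load_diff_pos[of j i] flow_inactive by force

lemma flow_load_gap_nonneg: "0 \<le> flow i j * (load s x i - load s x j - 1 / s j)"
  using flow_nonneg[of i j] active_load_diff_gt[of i j] flow_inactive[of i j]
  by (cases "active i j") auto

text \<open>With \<open>t = \<epsilon> / s i \<le> 1\<close> the load difference is at least \<open>(1 + t) / s j\<close> and
  \<open>1 / \<alpha> \<le> t / 4\<close>; then \<open>(1 + t) (1 - t / 4) \<ge> 1\<close>.\<close>
lemma load_diff_div_alpha_le_gap:
  assumes "active i j"
  shows "(load s x i - load s x j) / \<alpha> \<le> load s x i - load s x j - 1 / s j"
proof -
  define D where "D = load s x i - load s x j"
  define c where "c = 1 / s j"
  define t where "t = \<epsilon> / s i"
  have ij: "i \<in> V" "j \<in> V" using active_mem[OF assms] .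
  have c: "0 < c" using speed_pos[OF ij(2)] by (simp add: c_def)
  have t: "0 < t" "t \<le> 1"
    using eps speed_pos[OF ij(1)] one_le_speed[OF ij(1)] by (auto simp: t_def divide_le_eq)
  have "c * (1 + t) = 1 / s j + \<epsilon> / (s i * s j)"
    using speed_pos[OF ij(1)] speed_pos[OF ij(2)] by (simp add: c_def t_def field_simps)
  then have D: "c * (1 + t) \<le> D"
    using active_load_gap_ge[OF assms] by (simp add: D_def)
  have "1 / \<alpha> = \<epsilon> / (4 * smax V s)" by simp
  also have "\<dots> \<le> \<epsilon> / (4 * s i)"
    using eps speed_pos[OF ij(1)] speed_le_smax[OF ij(1)] by (intro divide_left_mono) auto
  finally have inv_alpha: "1 / \<alpha> \<le> t / 4" by (simp add: t_def)
  have D_nonneg: "0 \<le> D"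
    using D mult_pos_pos[OF c, of "1 + t"] t by linarith
  have "c \<le> c * ((1 + t) * (1 - t / 4))"
    using c t by (simp add: algebra_simps)
  also have "\<dots> \<le> D * (1 - 1 / \<alpha>)"
    using D D_nonneg inv_alpha t c by (subst mult.assoc[symmetric], intro mult_mono) auto
  finally show ?thesis by (simp add: D_def c_def algebra_simps)
qed

lemma flow_squared_weighted_le:
  "(flow i j)\<^sup>2 * (real (deg V E i) / s i + real (deg V E j) / s j)
   \<le> flow i j * (load s x i - load s x j - 1 / s j)"
proof (cases "active i j")
  case True
  define D where "D = load s x i - load s x j"
  define S where "S = 1 / s i + 1 / s j"
  define m where "m = real (dmax V E i j)"
  have ij: "i \<in> V" "j \<in> V" using active_mem[OF True] .
  have flow: "flow i j = D / (\<alpha> * m * S)"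
    by (simp add: flow_active[OF True] D_def S_def m_def)
  have "real (deg V E i) / s i + real (deg V E j) / s j \<le> m / s i + m / s j"
    using speed_pos[OF ij(1)] speed_pos[OF ij(2)]
    by (intro add_mono divide_right_mono) (auto simp: m_def dmax_def)
  then have "(flow i j)\<^sup>2 * (real (deg V E i) / s i + real (deg V E j) / s j) \<le> (flow i j)\<^sup>2 * (m * S)"
    by (intro mult_left_mono) (auto simp: S_def algebra_simps)
  also have "\<dots> = flow i j * (D / \<alpha>)"
  proof -
    have cancel: "(D / (A * m * S))\<^sup>2 * (m * S) = D / (A * m * S) * (D / A)"
      if "m * S \<noteq> 0" for A :: real
      using that by (simp add: power2_eq_square field_simps)
    have "m * S \<noteq> 0"
      using dmax_pos[OF True] inv_speed_sum_pos[OF True] by (simp add: m_def S_def)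
    then show ?thesis unfolding flow by (rule cancel)
  qed
  also have "\<dots> \<le> flow i j * (D - 1 / s j)"
    using load_diff_div_alpha_le_gap[OF True] flow_nonneg by (intro mult_left_mono) (auto simp: D_def)
  finally show ?thesis by (simp add: D_def)
qed (simp add: flow_inactive)

lemma active_flow_gap_ge:
  assumes "active i j"
  shows "\<epsilon>\<^sup>2 / (8 * real (maxdeg V E) * (smax V s)^3) \<le> flow i j * (load s x i - load s x j - 1 / s j)"
proof -
  define D where "D = load s x i - load s x j"
  define S where "S = 1 / s i + 1 / s j"
  define m where "m = real (dmax V E i j)"
  define \<Delta> where "\<Delta> = real (maxdeg V E)"
  define M where "M = smax V s"
  have ij: "i \<in> V" "j \<in> V" using active_mem[OF assms] .
  have si: "0 < s i" "s i \<le> M" and sj: "0 < s j" "s j \<le> M"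
    using speed_pos speed_le_smax ij by (auto simp: M_def)
  have m: "0 < m" "m \<le> \<Delta>"
    using dmax_pos[OF assms] dmax_le_maxdeg[OF ij] by (auto simp: m_def \<Delta>_def)
  have den: "0 < \<alpha> * m * S"
    unfolding S_def by (rule mult_pos_pos[OF mult_pos_pos[OF alpha_pos m(1)] inv_speed_sum_pos[OF assms]])
  have num: "1 / s j * (\<epsilon> / (s i * s j)) \<le> D * (D - 1 / s j)"
    using active_load_diff_gt[OF assms] active_load_gap_ge[OF assms] active_load_diff_pos[OF assms]
      eps si sj
    by (intro mult_mono) (auto simp: D_def)
  have "\<epsilon>\<^sup>2 / (8 * \<Delta> * M^3) = \<epsilon> / (M * (2 * M)) / (\<alpha> * \<Delta>)"
    using eps one_le_smax by (simp add: M_def field_simps power2_eq_square power3_eq_cube)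
  also have "\<dots> \<le> \<epsilon> / (s j * (s i + s j)) / (\<alpha> * m)"
    using eps si sj m alpha_pos
    by (intro frac_le divide_left_mono mult_mono mult_left_mono mult_pos_pos add_pos_pos) auto
  also have "\<dots> = 1 / s j * (\<epsilon> / (s i * s j)) / (\<alpha> * m * S)"
    using si sj by (simp add: S_def field_simps)
  also have "\<dots> \<le> D * (D - 1 / s j) / (\<alpha> * m * S)"
    using num den by (intro divide_right_mono) auto
  also have "\<dots> = flow i j * (D - 1 / s j)"
    by (simp add: flow_active[OF assms] D_def S_def m_def)
  finally show ?thesis by (simp only: D_def \<Delta>_def M_def)
qed

lemma sum_weighted_net_inflow:
  "(\<Sum>j\<in>V. c j * net_inflow j) = (\<Sum>i\<in>V. \<Sum>j\<in>V. flow i j * (c j - c i))"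
proof -
  have "(\<Sum>j\<in>V. c j * net_inflow j)
      = (\<Sum>j\<in>V. \<Sum>i\<in>V. flow i j * c j) - (\<Sum>i\<in>V. \<Sum>j\<in>V. flow i j * c i)"
    unfolding net_inflow_def
    by (simp add: right_diff_distrib sum_distrib_left sum_subtractf algebra_simps)
  also have "(\<Sum>j\<in>V. \<Sum>i\<in>V. flow i j * c j) = (\<Sum>i\<in>V. \<Sum>j\<in>V. flow i j * c j)"
    by (rule sum.swap)
  finally show ?thesis by (simp add: right_diff_distrib sum_subtractf)
qed

text \<open>Only the \<open>deg j\<close> neighbours of \<open>j\<close> exchange flow with it, and at most one direction of
  each edge carries flow; Cauchy-Schwarz over the neighbours gives the bound.\<close>
lemma net_inflow_squared_le:
  assumes "j \<in> V"
  shows "(net_inflow j)\<^sup>2 \<le> real (deg V E j) * (\<Sum>k\<in>V. (flow k j)\<^sup>2 + (flow j k)\<^sup>2)"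
proof -
  define N where "N = nbrs V E j"
  have N: "N \<subseteq> V" "finite N"
    using nbrs_subset finite_nbrs by (auto simp: N_def)
  have outside: "flow k j = 0 \<and> flow j k = 0" if "k \<in> V - N" for k
    using that Esym flow_not_edge by (auto simp: N_def nbrs_def)
  have "net_inflow j = (\<Sum>k\<in>N. flow k j - flow j k)"
    unfolding net_inflow_def sum_subtractf[symmetric]
    using outside by (intro sum.mono_neutral_right[OF finV N(1)]) auto
  then have "(net_inflow j)\<^sup>2 \<le> (\<Sum>k\<in>N. (flow k j - flow j k)\<^sup>2) * real (card N)"
    using sum_squared_le_sum_of_squares by simp
  also have "(\<Sum>k\<in>N. (flow k j - flow j k)\<^sup>2) = (\<Sum>k\<in>V. (flow k j)\<^sup>2 + (flow j k)\<^sup>2)"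
  proof -
    have "(\<Sum>k\<in>N. (flow k j - flow j k)\<^sup>2) = (\<Sum>k\<in>N. (flow k j)\<^sup>2 + (flow j k)\<^sup>2)"
      using flow_mult_flow_rev by (intro sum.cong) (auto simp: power2_diff)
    also have "\<dots> = (\<Sum>k\<in>V. (flow k j)\<^sup>2 + (flow j k)\<^sup>2)"
      using outside by (intro sum.mono_neutral_left[OF finV N(1)]) auto
    finally show ?thesis .
  qed
  finally show ?thesis by (simp add: N_def deg_def mult.commute)
qed

lemma sum_net_inflow_squared_le:
  "(\<Sum>j\<in>V. (net_inflow j)\<^sup>2 / s j)
    \<le> (\<Sum>i\<in>V. \<Sum>j\<in>V. flow i j * (load s x i - load s x j - 1 / s j))"
proof -
  define w where "w j = real (deg V E j) / s j" for j
  have "(\<Sum>j\<in>V. (net_inflow j)\<^sup>2 / s j)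
      \<le> (\<Sum>j\<in>V. w j * (\<Sum>k\<in>V. (flow k j)\<^sup>2 + (flow j k)\<^sup>2))"
  proof (rule sum_mono)
    fix j assume "j \<in> V"
    then show "(net_inflow j)\<^sup>2 / s j \<le> w j * (\<Sum>k\<in>V. (flow k j)\<^sup>2 + (flow j k)\<^sup>2)"
      using divide_right_mono[OF net_inflow_squared_le less_imp_le[OF speed_pos]]
      by (simp add: w_def)
  qed
  also have "\<dots> = (\<Sum>j\<in>V. \<Sum>k\<in>V. (flow k j)\<^sup>2 * w j)
      + (\<Sum>j\<in>V. \<Sum>k\<in>V. (flow j k)\<^sup>2 * w j)"
    by (simp add: sum_distrib_left sum.distrib algebra_simps)
  also have "(\<Sum>j\<in>V. \<Sum>k\<in>V. (flow k j)\<^sup>2 * w j) = (\<Sum>i\<in>V. \<Sum>j\<in>V. (flow i j)\<^sup>2 * w j)"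
    by (rule sum.swap)
  also have "\<dots> + (\<Sum>j\<in>V. \<Sum>k\<in>V. (flow j k)\<^sup>2 * w j)
      = (\<Sum>i\<in>V. \<Sum>j\<in>V. (flow i j)\<^sup>2 * (w i + w j))"
    by (simp add: sum.distrib algebra_simps)
  also have "\<dots> \<le> (\<Sum>i\<in>V. \<Sum>j\<in>V. flow i j * (load s x i - load s x j - 1 / s j))"
    unfolding w_def by (intro sum_mono flow_squared_weighted_le)
  finally show ?thesis .
qed

text \<open>The diagonal term is bounded by the probability \<open>1 - P i i\<close> of leaving \<open>i\<close>,
  the others by the probabilities of arriving.\<close>
lemma tasks_variance_le:
  assumes "i \<in> V"
  shows "(\<Sum>j\<in>V. real (x i) * P i j * (1 - P i j) / s j) \<le> (\<Sum>j\<in>V. flow i j * (1 / s i + 1 / s j))"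
proof -
  have sum_remove: "(\<Sum>j\<in>V. f j) = f i + (\<Sum>j\<in>V - {i}. f j)" for f :: "'v \<Rightarrow> real"
    using finV assms by (simp add: sum.remove)
  have "real (x i) * (1 - P i i) * P i i \<le> real (x i) * (1 - P i i)"
    by (rule mult_left_le[OF pmf_le_1]) (simp add: pmf_le_1)
  then have "real (x i) * P i i * (1 - P i i) \<le> real (x i) * (1 - P i i)"
    by (simp only: mult_ac)
  also have "\<dots> = real (x i) * (\<Sum>j\<in>V - {i}. P i j)"
    using sum_P_eq_1[OF assms] sum_remove[of "P i"] by simp
  also have "\<dots> = (\<Sum>j\<in>V - {i}. flow i j)"
    unfolding sum_distrib_left by (intro sum.cong refl tasks_mult_P_eq_flow[OF assms]) auto
  finally have stay: "real (x i) * P i i * (1 - P i i) / s i \<le> (\<Sum>j\<in>V - {i}. flow i j / s i)"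
    unfolding sum_divide_distrib[symmetric]
    using speed_pos[OF assms] by (rule divide_right_mono[OF _ less_imp_le])
  have move: "real (x i) * P i j * (1 - P i j) / s j \<le> flow i j / s j" if "j \<in> V - {i}" for j
  proof -
    have "real (x i) * P i j * (1 - P i j) \<le> real (x i) * P i j"
      by (simp add: mult_left_le)
    then show ?thesis
      using that assms speed_pos[of j] tasks_mult_P_eq_flow[of i j] by (simp add: divide_right_mono)
  qed
  have "(\<Sum>j\<in>V. real (x i) * P i j * (1 - P i j) / s j)
      \<le> (\<Sum>j\<in>V - {i}. flow i j / s i) + (\<Sum>j\<in>V - {i}. flow i j / s j)"
    unfolding sum_remove[of "\<lambda>j. real (x i) * P i j * (1 - P i j) / s j"]
    using stay move by (intro add_mono sum_mono) auto
  also have "\<dots> = (\<Sum>j\<in>V. flow i j * (1 / s i + 1 / s j))"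
    using sum_remove[of "\<lambda>j. flow i j * (1 / s i + 1 / s j)"]
    by (simp add: flow_self sum.distrib[symmetric] algebra_simps)
  finally show ?thesis .
qed

lemma sum_count_variance_le:
  "(\<Sum>j\<in>V. count_variance j / s j) \<le> (\<Sum>i\<in>V. \<Sum>j\<in>V. flow i j * (1 / s i + 1 / s j))"
proof -
  have "(\<Sum>j\<in>V. count_variance j / s j) = (\<Sum>i\<in>V. \<Sum>j\<in>V. real (x i) * P i j * (1 - P i j) / s j)"
    unfolding count_variance_def sum_divide_distrib by (rule sum.swap)
  also have "\<dots> \<le> (\<Sum>i\<in>V. \<Sum>j\<in>V. flow i j * (1 / s i + 1 / s j))"
    by (intro sum_mono tasks_variance_le)
  finally show ?thesis .
qed

text \<open>The linear part of the drop is twice the total flow-weighted load gap plus exactly the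
  variance bound, while the quadratic part costs at most one such total.\<close>
lemma expected_Phi_drop_ge:
  assumes "\<not> is_NE E s x"
  shows "\<epsilon>\<^sup>2 / (8 * real (maxdeg V E) * (smax V s)^3)
    \<le> Phi x - measure_pmf.expectation (round_step V E s \<alpha> x) Phi"
proof -
  define gain where "gain i j = flow i j * (load s x i - load s x j - 1 / s j)" for i j
  obtain a b where "active a b"
    using assms by (auto simp: is_NE_def active_def not_le)
  then have "\<epsilon>\<^sup>2 / (8 * real (maxdeg V E) * (smax V s)^3) \<le> gain a b"
    unfolding gain_def by (rule active_flow_gap_ge)
  also have "\<dots> \<le> (\<Sum>j\<in>V. gain a j)"
    using active_mem[OF \<open>active a b\<close>] finV flow_load_gap_nonneg
    by (intro member_le_sum) (auto simp: gain_def)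
  also have "\<dots> \<le> (\<Sum>i\<in>V. \<Sum>j\<in>V. gain i j)"
    using active_mem[OF \<open>active a b\<close>] finV flow_load_gap_nonneg
    by (intro member_le_sum sum_nonneg) (auto simp: gain_def)
  also have "\<dots> = (\<Sum>i\<in>V. \<Sum>j\<in>V. flow i j * ((2 * load s x i + 1 / s i) - (2 * load s x j + 1 / s j)))
      - (\<Sum>i\<in>V. \<Sum>j\<in>V. gain i j) - (\<Sum>i\<in>V. \<Sum>j\<in>V. flow i j * (1 / s i + 1 / s j))"
    by (simp add: gain_def sum_subtractf[symmetric] algebra_simps)
  also have "\<dots> \<le> Phi x - measure_pmf.expectation (round_step V E s \<alpha> x) Phi"
    unfolding expected_Phi_drop sum_weighted_net_inflow gain_def
    using sum_net_inflow_squared_le sum_count_variance_le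
    by (simp add: sum_negf[symmetric] algebra_simps)
  finally show ?thesis .
qed

lemma expected_Psi1_drop_eq:
  assumes "x \<in> set_pmf (proc V E s \<alpha> \<mu>0 k)"
  shows "measure_pmf.expectation (cond_pmf (joint V E s \<alpha> \<mu>0 k) {p. fst p = x})
           (\<lambda>p. Psi1 V s (fst p) - Psi1 V s (snd p))
     = Phi x - measure_pmf.expectation (round_step V E s \<alpha> x) Phi"
proof -
  have fin: "finite (set_pmf (round_step V E s \<alpha> x))"
    using finite_set_destinations by (simp add: round_step_def)
  have "measure_pmf.expectation (cond_pmf (joint V E s \<alpha> \<mu>0 k) {p. fst p = x})
          (\<lambda>p. Psi1 V s (fst p) - Psi1 V s (snd p))
      = measure_pmf.expectation (round_step V E s \<alpha> x) (\<lambda>y. Psi1 V s x - Psi1 V s y)"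
    unfolding joint_def cond_pmf_bind_map_Pair[OF assms] by simp
  also have "\<dots> = measure_pmf.expectation (round_step V E s \<alpha> x) (\<lambda>y. Phi x - Phi y)"
    by (intro integral_cong_AE) (auto simp: AE_measure_pmf_iff Psi1_diff_round)
  also have "\<dots> = Phi x - measure_pmf.expectation (round_step V E s \<alpha> x) Phi"
    by (subst Bochner_Integration.integral_diff) (auto intro: integrable_measure_pmf_finite[OF fin])
  finally show ?thesis .
qed

end

theorem lemma25:
  fixes V :: "'v set" and E :: "'v \<Rightarrow> 'v \<Rightarrow> bool" and s :: "'v \<Rightarrow> real"
    and \<epsilon> :: real and \<mu>0 :: "('v \<Rightarrow> nat) pmf" and k :: nat and x :: "'v \<Rightarrow> nat"
  assumes finV: "finite V"
    and Esym: "\<And>i j. E i j \<Longrightarrow> E j i"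
    and Eirr: "\<And>i. \<not> E i i"
    and EV: "\<And>i j. E i j \<Longrightarrow> i \<in> V \<and> j \<in> V"
    and eps: "0 < \<epsilon>" "\<epsilon> \<le> 1"
    and speeds: "\<forall>i\<in>V. \<exists>n::nat. 0 < n \<and> s i = real n * \<epsilon>"
    and minspeed: "(\<exists>i\<in>V. s i = 1) \<and> (\<forall>i\<in>V. 1 \<le> s i)"
    and notNE: "\<not> is_NE E s x"
    and reach: "x \<in> set_pmf (proc V E s (4 * smax V s / \<epsilon>) \<mu>0 k)"
  shows "measure_pmf.expectation
           (cond_pmf (joint V E s (4 * smax V s / \<epsilon>) \<mu>0 k) {p. fst p = x})
           (\<lambda>p. Psi1 V s (fst p) - Psi1 V s (snd p))
         \<ge> \<epsilon>^2 / (8 * real (maxdeg V E) * (smax V s)^3)"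
proof -
  interpret speed_network V E s \<epsilon> x
    using assms by unfold_locales auto
  show ?thesis
    using expected_Psi1_drop_eq[OF reach] expected_Phi_drop_ge[OF notNE] by simp
qed

end
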